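(* Let $\Gamma$ be a quantum graph with $N$ finite edges of the lengths $l_i$, $M$ infinite (semi-infinite) edges, and the coupling described by the unitary matrix $U = \left(\begin{array}{cc}U_1 &U_2 \\ U_3 & U_4 \end{array}\right)$, where $U_4$ corresponds to the coupling between the infinite edges. Let $k_0$ satisfy $\mathrm{det}\,[(1-k_0)U_4 - (1+k_0) I]\not = 0$ and let $k_0$ be a pole of the resolvent $(H - \lambda \,\mathrm{id})^{-1}$ of multiplicity $d$. Let $\Gamma_\varepsilon$ be a geometrically perturbed quantum graph with the edges of lengths $l_i(1+\varepsilon_i)$ and the same coupling as $\Gamma$, where $\vec\varepsilon=(\varepsilon_1,\dots,\varepsilon_N)$. Then there exists an $\varepsilon_0 >0$ such that for all $\vec\varepsilon$ in the open ball of radius $\varepsilon_0$ centred at $0$ the sum of multiplicities of the resolvent poles of $\Gamma_\varepsilon$ in a sufficiently small neighbourhood of $k_0$ is $d$.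
   Context: The Hamiltonian $H$ acts as $-\mathrm{d}^2/\mathrm{d}x^2$ on each edge of the graph, with domain consisting of $W^{2,2}$ functions satisfying the vertex coupling conditions $(U-I)\Psi+i(U+I)\Psi'=0$, where $\Psi,\Psi'$ are the vectors of boundary values and outward derivatives at all edge ends (all vertices merged into a single vertex with the block-diagonal coupling matrix $U$ encoding the graph topology); $U_1$ is the $2N\times 2N$ block referring to the ends of the finite edges, $U_4$ the $M\times M$ block referring to the infinite edges, $U_2,U_3$ the connecting blocks. Resolvent poles (resonances, in the lower complex half-plane of the momentum variable $k$, with energy $k^2$, obtained by analytic continuation / exterior complex scaling; they coincide with poles of the scattering matrix) are the solutions $k$ of $\mathrm{det}\,[(U-I)C_1(k)+ik(U+I)C_2(k)]=0$, where $C_1(k)=\mathrm{diag}(C_1^{(1)}(k),\dots,C_1^{(N)}(k),I_{M\times M})$, $C_2(k)=\mathrm{diag}(C_2^{(1)}(k),\dots,C_2^{(N)}(k),iI_{M\times M})$, $C_1^{(j)}(k)=\begin{pmatrix}0&1\\ \sin kl_j&\cos kl_j\end{pmatrix}$, $C_2^{(j)}(k)=\begin{pmatrix}1&0\\ -\cos kl_j&\sin kl_j\end{pmatrix}$. Equivalently, eliminating the external edges gives the effective energy-dependent coupling $\tilde U(k)=U_1-(1-k)U_2[(1-k)U_4-(k+1)I]^{-1}U_3$ on the compact part, which is defined when $(1-k)U_4-(k+1)I$ is regular. The multiplicity of a pole is its multiplicity as a zero in $k$ of this determinant, regarded as a function $F(k,\vec\varepsilon)$ holomorphic in $k$ and continuous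 in the length perturbation $\vec\varepsilon$. *)

theory Defs
  imports "HOL-Complex_Analysis.Complex_Analysis" "Jordan_Normal_Form.Determinant"
begin

definition cadjoint :: "complex mat \<Rightarrow> complex mat" where
  "cadjoint A = mat (dim_col A) (dim_row A) (\<lambda>(i,j). cnj (A $$ (j,i)))"

definition unitary_cmat :: "nat \<Rightarrow> complex mat \<Rightarrow> bool" where
  "unitary_cmat n U \<longleftrightarrow> U \<in> carrier_mat n n \<and> U * cadjoint U = 1\<^sub>m n"

text \<open>Block U_4 of U: the lower right M x M block (infinite edges), where
  the first 2N indices refer to the ends of the finite edges.\<close>
definition block_U4 :: "nat \<Rightarrow> nat \<Rightarrow> complex mat \<Rightarrow> complex mat" where
  "block_U4 N M U = mat M M (\<lambda>(i,j). U $$ (2*N + i, 2*N + j))"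

text \<open>C_1(k) and C_2(k): block diagonal (2N+M) x (2N+M) matrices built from the
  edge lengths L j (j < N); index 2j and 2j+1 are the two ends of edge j.\<close>
definition C1_mat :: "nat \<Rightarrow> nat \<Rightarrow> (nat \<Rightarrow> real) \<Rightarrow> complex \<Rightarrow> complex mat" where
  "C1_mat N M L k = mat (2*N+M) (2*N+M) (\<lambda>(i,j).
     if i < 2*N \<and> j < 2*N \<and> i div 2 = j div 2 then
       (let e = i div 2; s = sin (k * of_real (L e)); c = cos (k * of_real (L e)) in
        if i mod 2 = 0 then (if j mod 2 = 0 then 0 else 1)
        else (if j mod 2 = 0 then s else c))
     else if 2*N \<le> i \<and> i = j then 1 else 0)"

definition C2_mat :: "nat \<Rightarrow> nat \<Rightarrow> (nat \<Rightarrow> real) \<Rightarrow> complex \<Rightarrow> complex mat" where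
  "C2_mat N M L k = mat (2*N+M) (2*N+M) (\<lambda>(i,j).
     if i < 2*N \<and> j < 2*N \<and> i div 2 = j div 2 then
       (let e = i div 2; s = sin (k * of_real (L e)); c = cos (k * of_real (L e)) in
        if i mod 2 = 0 then (if j mod 2 = 0 then 1 else 0)
        else (if j mod 2 = 0 then - c else s))
     else if 2*N \<le> i \<and> i = j then \<i> else 0)"

text \<open>The resonance determinant det[(U-I)C_1(k) + ik(U+I)C_2(k)]; its zeros in k
  are the resolvent poles.\<close>
definition res_det :: "nat \<Rightarrow> nat \<Rightarrow> complex mat \<Rightarrow> (nat \<Rightarrow> real) \<Rightarrow> complex \<Rightarrow> complex" where
  "res_det N M U L k =
     det ((U - 1\<^sub>m (2*N+M)) * C1_mat N M L k
          + (\<i> * k) \<cdot>\<^sub>m ((U + 1\<^sub>m (2*N+M)) * C2_mat N M L k))"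

definition perturbed_lengths :: "(nat \<Rightarrow> real) \<Rightarrow> (nat \<Rightarrow> real) \<Rightarrow> nat \<Rightarrow> real" where
  "perturbed_lengths l eps j = l j * (1 + eps j)"

definition zero_of_mult :: "(complex \<Rightarrow> complex) \<Rightarrow> complex \<Rightarrow> nat \<Rightarrow> bool" where
  "zero_of_mult f z d \<longleftrightarrow> f z = 0 \<and> (\<forall>\<^sub>F w in at z. f w \<noteq> 0) \<and> zorder f z = int d"

definition eps_norm :: "nat \<Rightarrow> (nat \<Rightarrow> real) \<Rightarrow> real" where
  "eps_norm N eps = sqrt (\<Sum>j<N. (eps j)\<^sup>2)"

end

theory Submission
  imports Defs
begin

text \<open>The resonance determinant is entire in \<open>k\<close> and depends jointly continuously on the
  edge lengths and on \<open>k\<close>. Around the isolated zero \<open>k\<^sub>0\<close> choose a circle on which it does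
  not vanish; by compactness of the circle, a small enough length perturbation changes the
  determinant there by less than its modulus, and Rouche's theorem then shows that the
  perturbed determinant has the same number of zeros, counted with multiplicity, inside
  the circle.\<close>

lemma tendsto_det:
  fixes A :: "'b \<Rightarrow> 'a::real_normed_field mat"
  assumes "\<And>x. A x \<in> carrier_mat n n" "B \<in> carrier_mat n n"
    and "\<And>i j. i < n \<Longrightarrow> j < n \<Longrightarrow> ((\<lambda>x. A x $$ (i,j)) \<longlongrightarrow> B $$ (i,j)) F"
  shows "((\<lambda>x. det (A x)) \<longlongrightarrow> det B) F"
  unfolding det_def'[OF assms(1)] det_def'[OF assms(2)]
  by (intro tendsto_intros assms(3)) (auto simp: permutes_def)

lemma holomorphic_on_det:
  assumes "\<And>z. A z \<in> carrier_mat n n"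
    and "\<And>i j. i < n \<Longrightarrow> j < n \<Longrightarrow> (\<lambda>z. A z $$ (i,j)) holomorphic_on S"
  shows "(\<lambda>z. det (A z)) holomorphic_on S"
  unfolding det_def'[OF assms(1)]
  by (intro holomorphic_intros assms(2)) (auto simp: permutes_def)

lemma tendsto_C1_mat_index:
  assumes "\<And>j. j < N \<Longrightarrow> ((\<lambda>x. Lf x j) \<longlongrightarrow> L j) F" "(kf \<longlongrightarrow> k) F"
    and "i < 2*N+M" "j < 2*N+M"
  shows "((\<lambda>x. C1_mat N M (Lf x) (kf x) $$ (i,j)) \<longlongrightarrow> C1_mat N M L k $$ (i,j)) F"
  using assms(3,4) unfolding C1_mat_def Let_def
  by (auto intro!: tendsto_intros isCont_tendsto_compose[OF isCont_sin]
      isCont_tendsto_compose[OF isCont_cos] assms(1,2) dest: less_mult_imp_div_less)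

lemma tendsto_C2_mat_index:
  assumes "\<And>j. j < N \<Longrightarrow> ((\<lambda>x. Lf x j) \<longlongrightarrow> L j) F" "(kf \<longlongrightarrow> k) F"
    and "i < 2*N+M" "j < 2*N+M"
  shows "((\<lambda>x. C2_mat N M (Lf x) (kf x) $$ (i,j)) \<longlongrightarrow> C2_mat N M L k $$ (i,j)) F"
  using assms(3,4) unfolding C2_mat_def Let_def
  by (auto intro!: tendsto_intros isCont_tendsto_compose[OF isCont_sin]
      isCont_tendsto_compose[OF isCont_cos] assms(1,2) dest: less_mult_imp_div_less)

lemma holomorphic_on_If_const:
  "(P \<Longrightarrow> f holomorphic_on S) \<Longrightarrow> (\<not> P \<Longrightarrow> g holomorphic_on S) \<Longrightarrow>
   (\<lambda>x. if P then f x else g x) holomorphic_on S"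
  by (cases P) auto

lemma holomorphic_on_C1_mat_index:
  assumes "i < 2*N+M" "j < 2*N+M"
  shows "(\<lambda>k. C1_mat N M L k $$ (i,j)) holomorphic_on S"
  using assms unfolding C1_mat_def Let_def by (auto intro!: holomorphic_intros holomorphic_on_If_const)

lemma holomorphic_on_C2_mat_index:
  assumes "i < 2*N+M" "j < 2*N+M"
  shows "(\<lambda>k. C2_mat N M L k $$ (i,j)) holomorphic_on S"
  using assms unfolding C2_mat_def Let_def by (auto intro!: holomorphic_intros holomorphic_on_If_const)

definition resonance_mat :: "nat \<Rightarrow> nat \<Rightarrow> complex mat \<Rightarrow> (nat \<Rightarrow> real) \<Rightarrow> complex \<Rightarrow> complex mat"
  where "resonance_mat N M U L k = (U - 1\<^sub>m (2*N+M)) * C1_mat N M L k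
          + (\<i> * k) \<cdot>\<^sub>m ((U + 1\<^sub>m (2*N+M)) * C2_mat N M L k)"

lemma res_det_resonance_mat: "res_det N M U L k = det (resonance_mat N M U L k)"
  by (simp add: res_det_def resonance_mat_def)

lemma C1_mat_carrier: "C1_mat N M L k \<in> carrier_mat (2*N+M) (2*N+M)"
  by (simp add: C1_mat_def)

lemma C2_mat_carrier: "C2_mat N M L k \<in> carrier_mat (2*N+M) (2*N+M)"
  by (simp add: C2_mat_def)

lemma resonance_mat_carrier:
  "U \<in> carrier_mat (2*N+M) (2*N+M) \<Longrightarrow> resonance_mat N M U L k \<in> carrier_mat (2*N+M) (2*N+M)"
  unfolding resonance_mat_def using C1_mat_carrier C2_mat_carrier by fastforce

lemma index_resonance_mat:
  assumes "U \<in> carrier_mat (2*N+M) (2*N+M)" "i < 2*N+M" "j < 2*N+M"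
  shows "resonance_mat N M U L k $$ (i,j) =
     (\<Sum>m<2*N+M. (U - 1\<^sub>m (2*N+M)) $$ (i,m) * C1_mat N M L k $$ (m,j))
     + \<i> * k * (\<Sum>m<2*N+M. (U + 1\<^sub>m (2*N+M)) $$ (i,m) * C2_mat N M L k $$ (m,j))"
  using assms C1_mat_carrier[of N M L k] C2_mat_carrier[of N M L k]
  by (simp add: resonance_mat_def scalar_prod_def lessThan_atLeast0 eq_commute[of i])

lemma tendsto_res_det:
  assumes U: "U \<in> carrier_mat (2*N+M) (2*N+M)"
    and "\<And>j. j < N \<Longrightarrow> ((\<lambda>x. Lf x j) \<longlongrightarrow> L j) F" "(kf \<longlongrightarrow> k) F"
  shows "((\<lambda>x. res_det N M U (Lf x) (kf x)) \<longlongrightarrow> res_det N M U L k) F"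
  unfolding res_det_resonance_mat
  by (rule tendsto_det[OF resonance_mat_carrier[OF U] resonance_mat_carrier[OF U]])
    (auto simp: index_resonance_mat[OF U]
      intro!: tendsto_intros tendsto_C1_mat_index tendsto_C2_mat_index assms(2,3))

lemma holomorphic_on_res_det:
  assumes U: "U \<in> carrier_mat (2*N+M) (2*N+M)"
  shows "res_det N M U L holomorphic_on S"
  unfolding res_det_resonance_mat
  by (rule holomorphic_on_det[OF resonance_mat_carrier[OF U]])
    (auto simp: index_resonance_mat[OF U]
      intro!: holomorphic_intros holomorphic_on_C1_mat_index holomorphic_on_C2_mat_index)

lemma perturbation_dominated_on_compact:
  fixes F :: "'a \<Rightarrow> 'b::metric_space \<Rightarrow> 'c::real_normed_vector" and size :: "'a \<Rightarrow> real"
  assumes "compact K" "continuous_on K f" "\<And>w. w \<in> K \<Longrightarrow> f w \<noteq> 0"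
    and size_nonneg: "\<And>e. 0 \<le> size e"
    and conv: "\<And>E W w. (\<lambda>n. size (E n)) \<longlonglongrightarrow> 0 \<Longrightarrow> W \<longlonglongrightarrow> w \<Longrightarrow> w \<in> K \<Longrightarrow>
                 (\<lambda>n. F (E n) (W n)) \<longlonglongrightarrow> f w"
  shows "\<exists>e0>0. \<forall>e. size e < e0 \<longrightarrow> (\<forall>w\<in>K. norm (F e w - f w) < norm (f w))"
proof (rule ccontr)
  assume "\<not> ?thesis"
  then have "\<forall>n::nat. \<exists>e w. size e < inverse (real (Suc n)) \<and> w \<in> K \<and>
      norm (f w) \<le> norm (F e w - f w)"
    by (metis inverse_positive_iff_positive of_nat_0_less_iff zero_less_Suc not_less)
  then obtain E W where size_E: "\<And>n. size (E n) < inverse (real (Suc n))"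
    and W: "\<And>n. W n \<in> K" and far: "\<And>n. norm (f (W n)) \<le> norm (F (E n) (W n) - f (W n))"
    by metis
  obtain w \<sigma> where w: "w \<in> K" and \<sigma>: "strict_mono \<sigma>" and W\<sigma>: "(W \<circ> \<sigma>) \<longlonglongrightarrow> w"
    using \<open>compact K\<close> W unfolding compact_eq_seq_compact_metric seq_compact_def by metis
  have "(\<lambda>n. size (E n)) \<longlonglongrightarrow> 0"
    by (intro tendsto_sandwich[OF _ _ tendsto_const LIMSEQ_inverse_real_of_nat] always_eventually
        allI size_nonneg less_imp_le[OF size_E])
  then have "(\<lambda>n. size (E (\<sigma> n))) \<longlonglongrightarrow> 0"
    using LIMSEQ_subseq_LIMSEQ[OF _ \<sigma>] by (auto simp: o_def)
  then have lim_F: "(\<lambda>n. F (E (\<sigma> n)) (W (\<sigma> n))) \<longlonglongrightarrow> f w"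
    using conv[OF _ W\<sigma> w] by (simp add: o_def)
  have lim_f: "(\<lambda>n. f (W (\<sigma> n))) \<longlonglongrightarrow> f w"
    using continuous_on_tendsto_compose[OF \<open>continuous_on K f\<close> W\<sigma> w] W by (simp add: o_def)
  have "norm (f w) \<le> norm (f w - f w)"
    using far by (intro tendsto_le[OF _ tendsto_norm[OF tendsto_diff[OF lim_F lim_f]] tendsto_norm[OF lim_f]]) auto
  with w \<open>\<And>w. w \<in> K \<Longrightarrow> f w \<noteq> 0\<close> show False by simp
qed

lemma abs_le_eps_norm: "j < N \<Longrightarrow> \<bar>eps j\<bar> \<le> eps_norm N eps"
  unfolding eps_norm_def
  by (metis real_sqrt_abs real_sqrt_le_mono member_le_sum zero_le_power2 finite_lessThan lessThan_iff)

lemma tendsto_perturbed_lengths: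
  assumes "(\<lambda>n. eps_norm N (E n)) \<longlonglongrightarrow> 0" "j < N"
  shows "(\<lambda>n. perturbed_lengths l (E n) j) \<longlonglongrightarrow> l j"
proof -
  have "(\<lambda>n. E n j) \<longlonglongrightarrow> 0"
    using abs_le_eps_norm[OF \<open>j < N\<close>] by (intro Lim_null_comparison[OF _ assms(1)]) auto
  then have "(\<lambda>n. l j * (1 + E n j)) \<longlonglongrightarrow> l j * (1 + 0)"
    by (intro tendsto_intros)
  then show ?thesis by (simp add: perturbed_lengths_def)
qed

lemma res_det_perturbation_dominated:
  assumes U: "U \<in> carrier_mat (2*N+M) (2*N+M)"
    and "compact K" "\<And>w. w \<in> K \<Longrightarrow> res_det N M U l w \<noteq> 0"
  shows "\<exists>e0>0. \<forall>eps. eps_norm N eps < e0 \<longrightarrow> (\<forall>w\<in>K.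
           norm (res_det N M U (perturbed_lengths l eps) w - res_det N M U l w)
             < norm (res_det N M U l w))"
proof (rule perturbation_dominated_on_compact[OF \<open>compact K\<close> _ assms(3)])
  show "continuous_on K (res_det N M U l)"
    using holomorphic_on_res_det[OF U] by (rule holomorphic_on_imp_continuous_on)
  show "0 \<le> eps_norm N eps" for eps
    by (simp add: eps_norm_def sum_nonneg)
  show "(\<lambda>n. res_det N M U (perturbed_lengths l (E n)) (W n)) \<longlonglongrightarrow> res_det N M U l w"
    if "(\<lambda>n. eps_norm N (E n)) \<longlonglongrightarrow> 0" "W \<longlonglongrightarrow> w" for E W w
    using that by (intro tendsto_res_det[OF U] tendsto_perturbed_lengths)
qed

lemma finite_zeros_cball_entire:
  fixes f :: "complex \<Rightarrow> complex"
  assumes "f holomorphic_on UNIV" "f a \<noteq> 0"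
  shows "finite {z \<in> cball c R. f z = 0}"
proof (cases "f constant_on UNIV")
  case True
  then have "{z \<in> cball c R. f z = 0} = {}"
    using assms(2) by (auto simp: constant_on_def)
  then show ?thesis by (metis finite.emptyI)
next
  case False
  then show ?thesis
    by (intro holomorphic_compact_finite_zeros[OF assms(1)]) auto
qed

lemma zorder_nonneg_entire:
  fixes f :: "complex \<Rightarrow> complex"
  assumes "f holomorphic_on UNIV" "f a \<noteq> 0"
  shows "0 \<le> zorder f z"
proof (rule zorder_ge_0)
  show "f analytic_on {z}"
    using assms(1) analytic_on_holomorphic by blast
  have "\<forall>\<^sub>F w in at z. f w \<noteq> 0 \<and> w \<in> UNIV"
    using non_zero_neighbour_alt[OF assms(1)] assms(2) by auto
  then show "\<exists>\<^sub>F w in at z. f w \<noteq> 0"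
    by (auto intro: eventually_frequently elim: eventually_mono)
qed

lemma sum_winding_circlepath_zeros:
  fixes f :: "complex \<Rightarrow> complex" and h :: "complex \<Rightarrow> complex"
  assumes "0 < r" "finite {p \<in> S. f p = 0}" "ball c r \<subseteq> S"
    and "\<And>w. w \<in> sphere c r \<Longrightarrow> f w \<noteq> 0"
  shows "(\<Sum>p\<in>{p \<in> S. f p = 0}. winding_number (circlepath c r) p * h p)
          = (\<Sum>p\<in>{p \<in> ball c r. f p = 0}. h p)"
proof (rule sum.mono_neutral_cong_right[OF assms(2)])
  show "{p \<in> ball c r. f p = 0} \<subseteq> {p \<in> S. f p = 0}"
    using assms(3) by auto
  show "\<forall>p\<in>{p \<in> S. f p = 0} - {p \<in> ball c r. f p = 0}. winding_number (circlepath c r) p * h p = 0"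
  proof
    fix p assume p: "p \<in> {p \<in> S. f p = 0} - {p \<in> ball c r. f p = 0}"
    have "p \<notin> cball c r"
      using p assms(4) by (auto simp: less_le)
    then have "winding_number (circlepath c r) p = 0"
      using \<open>0 < r\<close> by (intro winding_number_zero_outside[of _ "cball c r"])
        (auto simp: path_image_circlepath_nonneg)
    then show "winding_number (circlepath c r) p * h p = 0" by simp
  qed
  show "winding_number (circlepath c r) p * h p = h p" if "p \<in> {p \<in> ball c r. f p = 0}" for p
    using that by (simp add: winding_number_circlepath dist_norm norm_minus_commute)
qed

lemma Rouche_zero_count_entire:
  fixes f g :: "complex \<Rightarrow> complex"
  assumes f: "f holomorphic_on UNIV" and g: "g holomorphic_on UNIV" and "0 < r"
    and dominated: "\<And>w. w \<in> sphere c r \<Longrightarrow> norm (g w - f w) < norm (f w)"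
  shows "(\<Sum>p\<in>{p \<in> ball c r. g p = 0}. zorder g p) = (\<Sum>p\<in>{p \<in> ball c r. f p = 0}. zorder f p)"
proof -
  define S where "S = ball c (r + 1)"
  have f_sphere: "f w \<noteq> 0" and g_sphere: "g w \<noteq> 0" if "w \<in> sphere c r" for w
    using dominated[OF that] by auto
  have c_r: "c + of_real r \<in> sphere c r"
    using \<open>0 < r\<close> by (simp add: dist_norm)
  have fin: "finite {p \<in> S. f p = 0}" "finite {p \<in> S. g p = 0}"
    by (rule finite_subset[OF _ finite_zeros_cball_entire[OF f f_sphere[OF c_r], of c "r + 1"]],
        force simp: S_def)
      (rule finite_subset[OF _ finite_zeros_cball_entire[OF g g_sphere[OF c_r], of c "r + 1"]],
        force simp: S_def)
  have "(\<Sum>p\<in>{p \<in> S. f p + (g p - f p) = 0}. winding_number (circlepath c r) p * zorder (\<lambda>p. f p + (g p - f p)) p)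
      = (\<Sum>p\<in>{p \<in> S. f p = 0}. winding_number (circlepath c r) p * zorder f p)"
  proof (rule Rouche_theorem)
    show "open S" "connected S" "valid_path (circlepath c r)"
      "pathfinish (circlepath c r) = pathstart (circlepath c r)"
      by (auto simp: S_def)
    show "finite {p \<in> S. f p + (g p - f p) = 0}" "finite {p \<in> S. f p = 0}"
      using fin by simp_all
    show "f holomorphic_on S" "(\<lambda>p. g p - f p) holomorphic_on S"
      using holomorphic_on_subset[OF f] holomorphic_on_subset[OF g] by (auto intro!: holomorphic_intros)
    show "path_image (circlepath c r) \<subseteq> S"
      using \<open>0 < r\<close> by (auto simp: S_def path_image_circlepath_nonneg)
    show "\<forall>z\<in>path_image (circlepath c r). norm (g z - f z) < norm (f z)"
      using \<open>0 < r\<close> dominated by (simp add: path_image_circlepath_nonneg)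
    show "\<forall>z. z \<notin> S \<longrightarrow> winding_number (circlepath c r) z = 0"
      using \<open>0 < r\<close> by (auto simp: S_def path_image_circlepath_nonneg
          intro!: winding_number_zero_outside[of _ "cball c r"])
  qed
  moreover have "ball c r \<subseteq> S"
    by (auto simp: S_def)
  ultimately have "(\<Sum>p\<in>{p \<in> ball c r. g p = 0}. of_int (zorder g p) :: complex)
      = (\<Sum>p\<in>{p \<in> ball c r. f p = 0}. of_int (zorder f p))"
    using sum_winding_circlepath_zeros[OF \<open>0 < r\<close> fin(1), where h = "\<lambda>p. of_int (zorder f p)"]
      sum_winding_circlepath_zeros[OF \<open>0 < r\<close> fin(2), where h = "\<lambda>p. of_int (zorder g p)"]
      f_sphere g_sphere
    by simp
  then show ?thesis
    by (metis (mono_tags) of_int_eq_iff of_int_sum)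
qed

lemma zero_of_mult_isolating_ball:
  assumes "zero_of_mult f z d"
  obtains r0 where "0 < r0" "\<And>w. w \<in> ball z r0 \<Longrightarrow> f w = 0 \<longleftrightarrow> w = z"
proof -
  obtain r0 where "0 < r0" "\<And>w. w \<noteq> z \<Longrightarrow> dist w z < r0 \<Longrightarrow> f w \<noteq> 0"
    using assms unfolding zero_of_mult_def eventually_at by blast
  with assms that[of r0] show ?thesis
    by (auto simp: zero_of_mult_def dist_commute)
qed

lemma zero_count_stable_entire:
  fixes f g :: "complex \<Rightarrow> complex"
  assumes f: "f holomorphic_on UNIV" and g: "g holomorphic_on UNIV" and "0 < r"
    and dominated: "\<And>w. w \<in> sphere c r \<Longrightarrow> norm (g w - f w) < norm (f w)"
    and zeros_f: "{p \<in> ball c r. f p = 0} = {c}" and "zorder f c = int d"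
  shows "finite {p \<in> ball c r. g p = 0} \<and> (\<Sum>p\<in>{p \<in> ball c r. g p = 0}. nat (zorder g p)) = d"
proof
  have "c + of_real r \<in> sphere c r"
    using \<open>0 < r\<close> by (simp add: dist_norm)
  then have g_nonzero: "g (c + of_real r) \<noteq> 0"
    using dominated by fastforce
  show "finite {p \<in> ball c r. g p = 0}"
    by (rule finite_subset[OF _ finite_zeros_cball_entire[OF g g_nonzero, of c r]]) auto
  have "int (\<Sum>p\<in>{p \<in> ball c r. g p = 0}. nat (zorder g p)) = (\<Sum>p\<in>{p \<in> ball c r. g p = 0}. zorder g p)"
    using zorder_nonneg_entire[OF g g_nonzero] by (simp add: of_nat_sum)
  also have "\<dots> = (\<Sum>p\<in>{p \<in> ball c r. f p = 0}. zorder f p)"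
    using Rouche_zero_count_entire[OF f g \<open>0 < r\<close> dominated] .
  also have "\<dots> = int d"
    unfolding zeros_f using \<open>zorder f c = int d\<close> by simp
  finally show "(\<Sum>p\<in>{p \<in> ball c r. g p = 0}. nat (zorder g p)) = d"
    by (simp only: of_nat_eq_iff)
qed

lemma res_det_zero_count_stable:
  assumes U: "U \<in> carrier_mat (2*N+M) (2*N+M)" and "0 < r"
    and zeros: "{p \<in> cball k0 r. res_det N M U l p = 0} = {k0}"
    and order: "zorder (res_det N M U l) k0 = int d"
  shows "\<exists>e0>0. \<forall>eps. eps_norm N eps < e0 \<longrightarrow>
           (let F = res_det N M U (perturbed_lengths l eps); Z = {k \<in> ball k0 r. F k = 0}
            in finite Z \<and> (\<Sum>k\<in>Z. nat (zorder F k)) = d)"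
proof -
  have "res_det N M U l w \<noteq> 0" if "w \<in> sphere k0 r" for w
  proof
    assume "res_det N M U l w = 0"
    with that have "w \<in> {p \<in> cball k0 r. res_det N M U l p = 0}" by auto
    with zeros that \<open>0 < r\<close> show False by auto
  qed
  from res_det_perturbation_dominated[OF U compact_sphere this]
  obtain e0 where "0 < e0" and dominated: "\<And>eps. eps_norm N eps < e0 \<Longrightarrow> \<forall>w\<in>sphere k0 r.
      norm (res_det N M U (perturbed_lengths l eps) w - res_det N M U l w) < norm (res_det N M U l w)"
    by blast
  have "{p \<in> ball k0 r. res_det N M U l p = 0} = {p \<in> cball k0 r. res_det N M U l p = 0} \<inter> ball k0 r"
    by auto
  also have "\<dots> = {k0}"
    using zeros \<open>0 < r\<close> by simp
  finally have zeros_ball: "{p \<in> ball k0 r. res_det N M U l p = 0} = {k0}" .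
  have "finite {k \<in> ball k0 r. res_det N M U (perturbed_lengths l eps) k = 0} \<and>
        (\<Sum>k\<in>{k \<in> ball k0 r. res_det N M U (perturbed_lengths l eps) k = 0}.
           nat (zorder (res_det N M U (perturbed_lengths l eps)) k)) = d"
    if "eps_norm N eps < e0" for eps
    by (rule zero_count_stable_entire[OF holomorphic_on_res_det[OF U] holomorphic_on_res_det[OF U]
          \<open>0 < r\<close> _ zeros_ball order]) (use dominated[OF that] in blast)
  with \<open>0 < e0\<close> show ?thesis
    unfolding Let_def by blast
qed

theorem theorem5:
  fixes N M :: nat and l :: "nat \<Rightarrow> real" and U :: "complex mat"
    and k0 :: complex and d :: nat
  assumes lpos: "\<And>j. j < N \<Longrightarrow> l j > 0"
    and unitary: "unitary_cmat (2*N+M) U"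
    and regular: "det ((1 - k0) \<cdot>\<^sub>m block_U4 N M U - (1 + k0) \<cdot>\<^sub>m 1\<^sub>m M) \<noteq> 0"
    and pole: "zero_of_mult (res_det N M U l) k0 d"
  shows "\<exists>r0>0. \<forall>r. 0 < r \<and> r < r0 \<longrightarrow>
           (\<exists>\<epsilon>0>0. \<forall>eps :: nat \<Rightarrow> real. eps_norm N eps < \<epsilon>0 \<longrightarrow>
              (let F = res_det N M U (perturbed_lengths l eps);
                   Z = {k \<in> ball k0 r. F k = 0}
               in finite Z \<and> (\<Sum>k\<in>Z. nat (zorder F k)) = d))"
proof -
  have U: "U \<in> carrier_mat (2*N+M) (2*N+M)"
    using unitary by (simp add: unitary_cmat_def)
  obtain r0 where "0 < r0" and zeros: "\<And>w. w \<in> ball k0 r0 \<Longrightarrow> res_det N M U l w = 0 \<longleftrightarrow> w = k0"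
    using zero_of_mult_isolating_ball[OF pole] by blast
  have order: "zorder (res_det N M U l) k0 = int d"
    using pole by (simp add: zero_of_mult_def)
  have stable: "\<exists>e0>0. \<forall>eps. eps_norm N eps < e0 \<longrightarrow>
           (let F = res_det N M U (perturbed_lengths l eps); Z = {k \<in> ball k0 r. F k = 0}
            in finite Z \<and> (\<Sum>k\<in>Z. nat (zorder F k)) = d)" if "0 < r \<and> r < r0" for r
  proof (rule res_det_zero_count_stable[OF U _ _ order])
    show "0 < r"
      using that by simp
    show "{p \<in> cball k0 r. res_det N M U l p = 0} = {k0}"
      using that zeros by (auto simp: dist_commute)
  qed
  show ?thesis
    by (rule exI[of _ r0], intro conjI allI impI \<open>0 < r0\<close> stable) auto
qed

end
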